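(* Let $Y$ be an acyclicity property. If $\mathrm{aGRD}\not\subseteq Y$, then $Y\subset Y^D$ (i.e. $Y\subseteq Y^D$ and there is a set of rules satisfying $Y^D$ but not $Y$).
   Context: Existential rules, $GRD(\mathcal R)$, positions and position graphs $PG^F$, $PG^D$ as usual: $PG^F(\mathcal R)$ is the basic position graph (edges from each frontier body position to each head position with same term or existential position) plus edges from each $k$-th head position of $R_i$ to each $k$-th body position of $R_j$ with same predicate; $PG^D(\mathcal R)$ keeps such transition edges only if there is a path from $R_i$ to $R_j$ in $GRD(\mathcal R)$, where $R_j$ depends on $R_i$ iff some application of $R_i$ to some atomset enables a new useful application of $R_j$. An acyclicity property is given by a marking function $Y$ assigning to each node of a position graph a subset of its successors; $Y^X$ holds for $\mathcal R$ iff $X(\mathcal R)$ contains no cycle through an existential position $[a,i]$ all of whose nodes lie in the marking of $[a,i]$; $Y$ alone denotes $Y^F$. $\mathrm{aGRD}$ is the class of finite rule sets $\mathcal R$ with $GRD(\mathcal R)$ acyclic. $P_1\subseteq P_2$ means every rule set satisfying $P_1$ satisfies $P_2$; $\subset$ is strict inclusion. *)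

theory Defs
  imports Main
begin

datatype trm = Var nat | Cst nat

type_synonym atom = "nat \<times> trm list"

datatype rule = Rule (body: "atom set") (head: "atom set")

fun vars_t :: "trm \<Rightarrow> nat set" where
  "vars_t (Var x) = {x}"
| "vars_t (Cst c) = {}"

definition vars_atom :: "atom \<Rightarrow> nat set" where
  "vars_atom a = (\<Union>t\<in>set (snd a). vars_t t)"

definition varsA :: "atom set \<Rightarrow> nat set" where
  "varsA A = (\<Union>a\<in>A. vars_atom a)"

fun subst_t :: "(nat \<Rightarrow> trm) \<Rightarrow> trm \<Rightarrow> trm" where
  "subst_t s (Var x) = s x"
| "subst_t s (Cst c) = Cst c"

definition subst_atom :: "(nat \<Rightarrow> trm) \<Rightarrow> atom \<Rightarrow> atom" where
  "subst_atom s a = (fst a, map (subst_t s) (snd a))"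

definition hom :: "(nat \<Rightarrow> trm) \<Rightarrow> atom set \<Rightarrow> atom set \<Rightarrow> bool" where
  "hom s A B \<longleftrightarrow> subst_atom s ` A \<subseteq> B"

definition frontier :: "rule \<Rightarrow> nat set" where
  "frontier r = varsA (body r) \<inter> varsA (head r)"

definition existentials :: "rule \<Rightarrow> nat set" where
  "existentials r = varsA (head r) - varsA (body r)"

definition ruleset :: "rule set \<Rightarrow> bool" where
  "ruleset R \<longleftrightarrow> finite R \<and> (\<forall>r\<in>R. finite (body r) \<and> finite (head r))"

text \<open>The application of r to F via pi yields F \<union> sigma(head r).\<close>
definition safe_ext :: "atom set \<Rightarrow> rule \<Rightarrow> (nat \<Rightarrow> trm) \<Rightarrow> (nat \<Rightarrow> trm) \<Rightarrow> bool" where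
  "safe_ext F r \<pi> \<sigma> \<longleftrightarrow>
     (\<forall>x\<in>varsA (body r). \<sigma> x = \<pi> x) \<and> inj_on \<sigma> (existentials r) \<and>
     (\<forall>x\<in>existentials r. \<exists>y. \<sigma> x = Var y \<and> y \<notin> varsA F)"

text \<open>Rule r2 depends on rule r1: some application of r1 to some atomset F enables a new
  useful application of r2 (new: not a homomorphism into F; useful: cannot be extended
  to a homomorphism of the head of r2 into the resulting atomset).\<close>
definition depends :: "rule \<Rightarrow> rule \<Rightarrow> bool" where
  "depends r1 r2 \<longleftrightarrow>
     (\<exists>F \<pi>1 \<sigma> \<pi>2. finite F \<and> hom \<pi>1 (body r1) F \<and> safe_ext F r1 \<pi>1 \<sigma> \<and>
        hom \<pi>2 (body r2) (F \<union> subst_atom \<sigma> ` head r1) \<and>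
        \<not> hom \<pi>2 (body r2) F \<and>
        \<not> (\<exists>\<pi>'. (\<forall>x\<in>varsA (body r2). \<pi>' x = \<pi>2 x) \<and>
                 hom \<pi>' (head r2) (F \<union> subst_atom \<sigma> ` head r1)))"

definition GRD :: "rule set \<Rightarrow> (rule \<times> rule) set" where
  "GRD R = {(r1, r2). r1 \<in> R \<and> r2 \<in> R \<and> depends r1 r2}"

definition aGRD :: "rule set \<Rightarrow> bool" where
  "aGRD R \<longleftrightarrow> ruleset R \<and> acyclic (GRD R)"

text \<open>A position: rule, side (True = head, False = body), atom occurrence, argument index (0-based).\<close>
type_synonym pos = "rule \<times> bool \<times> atom \<times> nat"

definition nodes :: "rule set \<Rightarrow> pos set" where
  "nodes R = {(r, h, a, i). r \<in> R \<and> a \<in> (if h then head r else body r) \<and> i < length (snd a)}"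

definition exist_pos :: "rule set \<Rightarrow> pos \<Rightarrow> bool" where
  "exist_pos R p \<longleftrightarrow> p \<in> nodes R \<and>
     (case p of (r, h, a, i) \<Rightarrow> h \<and> (\<exists>x. snd a ! i = Var x \<and> x \<in> existentials r))"

definition basic_edges :: "rule set \<Rightarrow> (pos \<times> pos) set" where
  "basic_edges R = {((r, False, b, i), (r', True, a, j)) | r r' b i a j.
     r' = r \<and> (r, False, b, i) \<in> nodes R \<and> (r, True, a, j) \<in> nodes R \<and>
     (\<exists>x. snd b ! i = Var x \<and> x \<in> frontier r \<and>
          (snd a ! j = Var x \<or> (\<exists>y. snd a ! j = Var y \<and> y \<in> existentials r)))}"

definition transition_edges :: "rule set \<Rightarrow> (pos \<times> pos) set" where
  "transition_edges R = {((r, True, a, k), (r', False, b, k)) | r r' a b k.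
     (r, True, a, k) \<in> nodes R \<and> (r', False, b, k) \<in> nodes R \<and> fst a = fst b}"

definition PGF :: "rule set \<Rightarrow> (pos \<times> pos) set" where
  "PGF R = basic_edges R \<union> transition_edges R"

definition PGD :: "rule set \<Rightarrow> (pos \<times> pos) set" where
  "PGD R = basic_edges R \<union>
     {e \<in> transition_edges R. (fst (fst e), fst (snd e)) \<in> (GRD R)\<^sup>+}"

definition marking :: "(rule set \<Rightarrow> pos \<Rightarrow> pos set) \<Rightarrow> bool" where
  "marking Y \<longleftrightarrow> (\<forall>R p. p \<in> nodes R \<longrightarrow> Y R p \<subseteq> {q. (p, q) \<in> (PGF R)\<^sup>+})"

text \<open>Y^X holds for R: X(R) has no cycle through an existential position p all of whose nodes
  lie in the marking of p.\<close>
definition acyc :: "(rule set \<Rightarrow> (pos \<times> pos) set) \<Rightarrow> (rule set \<Rightarrow> pos \<Rightarrow> pos set)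
                      \<Rightarrow> rule set \<Rightarrow> bool" where
  "acyc X Y R \<longleftrightarrow> ruleset R \<and>
     \<not> (\<exists>p. exist_pos R p \<and> (p, p) \<in> (X R \<inter> (Y R p \<times> Y R p))\<^sup>+)"

end

theory Submission
  imports Defs
begin

text \<open>Since \<open>PG\<^sup>D(R) \<subseteq> PG\<^sup>F(R)\<close>, every cycle forbidden by \<open>Y\<close> in \<open>PG\<^sup>D\<close> is also one in
  \<open>PG\<^sup>F\<close>, so \<open>Y \<subseteq> Y\<^sup>D\<close>. For strictness, a basic edge leads from the body to the head of
  one rule, and a transition edge kept in \<open>PG\<^sup>D\<close> joins rules related by \<open>GRD\<^sup>+\<close>; hence a
  path in \<open>PG\<^sup>D\<close> is either a single basic edge or joins rules related by \<open>GRD\<^sup>+\<close>. If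
  \<open>GRD(R)\<close> is acyclic, \<open>PG\<^sup>D(R)\<close> therefore has no cycle at all, so \<open>R\<close> satisfies \<open>Y\<^sup>D\<close>
  for every \<open>Y\<close>; a rule set in \<open>aGRD\<close> violating \<open>Y\<close> separates the two properties.\<close>

lemma PGD_subset_PGF: "PGD R \<subseteq> PGF R"
  unfolding PGD_def PGF_def by auto

lemma acyc_antimono:
  assumes "X R \<subseteq> X' R" and "acyc X' Y R"
  shows "acyc X Y R"
proof -
  have "\<And>p. (X R \<inter> (Y R p \<times> Y R p))\<^sup>+ \<subseteq> (X' R \<inter> (Y R p \<times> Y R p))\<^sup>+"
    using assms(1) by (intro trancl_mono_subset) auto
  then show ?thesis using assms(2) unfolding acyc_def by blast
qed

lemma basic_edge_body_to_head:
  "(p, q) \<in> basic_edges R \<Longrightarrow> fst p = fst q \<and> \<not> fst (snd p) \<and> fst (snd q)"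
  unfolding basic_edges_def by auto

lemma PGD_trancl_cases:
  assumes "(p, q) \<in> (PGD R)\<^sup>+"
  shows "(p, q) \<in> basic_edges R \<or> (fst p, fst q) \<in> (GRD R)\<^sup>+"
  using assms
proof (induction rule: trancl_induct)
  case (base q)
  then show ?case unfolding PGD_def by auto
next
  case (step q q')
  from step.hyps(2) consider "(q, q') \<in> basic_edges R" | "(fst q, fst q') \<in> (GRD R)\<^sup>+"
    unfolding PGD_def by auto
  then show ?case
  proof cases
    case 1
    with step.IH show ?thesis
      using basic_edge_body_to_head by (metis (no_types, lifting))
  next
    case 2
    with step.IH show ?thesis
      using basic_edge_body_to_head by (metis trancl_trans)
  qed
qed

lemma acyclic_PGD_if_acyclic_GRD:
  assumes "acyclic (GRD R)"
  shows "acyclic (PGD R)"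
  unfolding acyclic_def
proof
  fix p
  show "(p, p) \<notin> (PGD R)\<^sup>+"
    using PGD_trancl_cases[of p p R] basic_edge_body_to_head assms
    unfolding acyclic_def by blast
qed

lemma acyc_PGD_if_aGRD:
  assumes "aGRD R"
  shows "acyc PGD Y R"
proof -
  have "\<And>p. (PGD R \<inter> (Y R p \<times> Y R p))\<^sup>+ \<subseteq> (PGD R)\<^sup>+"
    by (intro trancl_mono_subset) auto
  then show ?thesis
    using assms acyclic_PGD_if_acyclic_GRD unfolding aGRD_def acyc_def acyclic_def by blast
qed

theorem mainTheorem4:
  fixes Y :: "rule set \<Rightarrow> pos \<Rightarrow> pos set"
  assumes "marking Y"
    and "\<not> (\<forall>R. aGRD R \<longrightarrow> acyc PGF Y R)"
  shows "(\<forall>R. acyc PGF Y R \<longrightarrow> acyc PGD Y R) \<and> (\<exists>R. acyc PGD Y R \<and> \<not> acyc PGF Y R)"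
proof
  show "\<forall>R. acyc PGF Y R \<longrightarrow> acyc PGD Y R"
    using acyc_antimono[of PGD _ PGF, OF PGD_subset_PGF] by blast
next
  from assms(2) obtain R where "aGRD R" and "\<not> acyc PGF Y R" by blast
  then show "\<exists>R. acyc PGD Y R \<and> \<not> acyc PGF Y R"
    using acyc_PGD_if_aGRD by blast
qed

end
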